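(* Let $\mathcal{X}$ be a finite set of $n$ agents, $\Gamma$ a merit distribution with finite expected merits, and $w_1\ge\dots\ge w_n$ position weights. Then all ranking distributions that are $1$-fair with respect to $\Gamma$ have the same expected utility $U(\pi,\Gamma)$ for the principal.
   Context: A ranking of $\mathcal{X}$ is a bijection $\sigma:\{1,\dots,n\}\to\mathcal{X}$ ($\sigma(k)$ is the agent in position $k$); a ranking distribution $\pi$ is a probability distribution over rankings, with marginals $P_\pi(x,k)=\sum_{\sigma:\sigma(k)=x}\pi(\sigma)$. A merit distribution $\Gamma$ is a probability distribution over $v\in\mathbb{R}^{\mathcal{X}}$ with pairwise distinct entries on its support. $\mathrm{Top}_k(x;v)$ is the event $|\{x': v_{x'}>v_x\}|<k$. For $\rho\in[0,1]$, $\pi$ is $\rho$-fair if $\sum_{k'=1}^{k}P_\pi(x,k')\ge\rho\cdot\Pr_{v\sim\Gamma}[\mathrm{Top}_k(x;v)]$ for all $x,k$. Utility: $U(\sigma,v)=\sum_{k=1}^n w_k v_{\sigma(k)}$, $U(\pi,\Gamma)=\mathbb{E}_{\sigma\sim\pi,v\sim\Gamma}[U(\sigma,v)]$ with $\sigma,v$ independent. *)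

theory Defs
  imports "HOL-Probability.Probability"
begin

text \<open>Agents form the finite type 'x; n = CARD('x).
  A ranking is a bijection from {1..n} to the agents (values outside {1..n} are irrelevant).\<close>

definition is_ranking :: "(nat \<Rightarrow> 'x::finite) \<Rightarrow> bool" where
  "is_ranking \<sigma> \<longleftrightarrow> bij_betw \<sigma> {1..CARD('x)} (UNIV :: 'x set)"

definition ranking_distribution :: "(nat \<Rightarrow> 'x::finite) pmf \<Rightarrow> bool" where
  "ranking_distribution \<pi> \<longleftrightarrow> (\<forall>\<sigma>\<in>set_pmf \<pi>. is_ranking \<sigma>)"

definition marg :: "(nat \<Rightarrow> 'x) pmf \<Rightarrow> 'x \<Rightarrow> nat \<Rightarrow> real" where
  "marg \<pi> x k = measure_pmf.prob \<pi> {\<sigma>. \<sigma> k = x}"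

definition merit_distribution :: "('x::finite \<Rightarrow> real) measure \<Rightarrow> bool" where
  "merit_distribution \<Gamma> \<longleftrightarrow> prob_space \<Gamma>
     \<and> sets \<Gamma> = sets (PiM (UNIV :: 'x set) (\<lambda>_. borel))
     \<and> (AE v in \<Gamma>. inj v)"

definition Top :: "nat \<Rightarrow> 'x::finite \<Rightarrow> ('x \<Rightarrow> real) \<Rightarrow> bool" where
  "Top k x v \<longleftrightarrow> card {x'. v x' > v x} < k"

definition rho_fair :: "real \<Rightarrow> ('x::finite \<Rightarrow> real) measure \<Rightarrow> (nat \<Rightarrow> 'x) pmf \<Rightarrow> bool" where
  "rho_fair \<rho> \<Gamma> \<pi> \<longleftrightarrow>
     (\<forall>x. \<forall>k\<in>{1..CARD('x)}.
        (\<Sum>k'=1..k. marg \<pi> x k') \<ge> \<rho> * measure \<Gamma> {v \<in> space \<Gamma>. Top k x v})"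

definition util :: "(nat \<Rightarrow> real) \<Rightarrow> (nat \<Rightarrow> 'x::finite) \<Rightarrow> ('x \<Rightarrow> real) \<Rightarrow> real" where
  "util w \<sigma> v = (\<Sum>k=1..CARD('x). w k * v (\<sigma> k))"

definition exp_util :: "(nat \<Rightarrow> real) \<Rightarrow> (nat \<Rightarrow> 'x::finite) pmf \<Rightarrow> ('x \<Rightarrow> real) measure \<Rightarrow> real" where
  "exp_util w \<pi> \<Gamma> = integral\<^sup>L (measure_pmf \<pi> \<Otimes>\<^sub>M \<Gamma>) (\<lambda>(\<sigma>, v). util w \<sigma> v)"

end

theory Submission imports Defs begin

text \<open>
  Summing the 1-fairness inequalities
  \<open>\<Sum>k'\<le>k. P\<^sub>\<pi>(x,k') \<ge> Pr[Top\<^sub>k(x;v)]\<close> over all agents \<open>x\<close> gives \<open>k\<close> on both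
  sides: every position holds exactly one agent, and since merits are almost surely
  distinct, almost surely exactly \<open>k\<close> agents lie in the top \<open>k\<close>. Hence every inequality is
  an equality, so all marginals \<open>P\<^sub>\<pi>(x,k)\<close> of a 1-fair \<open>\<pi>\<close> are determined by \<open>\<Gamma>\<close>.
  By independence of \<open>\<sigma>\<close> and \<open>v\<close>, the expected utility
  \<open>\<Sum>\<^sub>k \<Sum>\<^sub>x w\<^sub>k P\<^sub>\<pi>(x,k) E[v\<^sub>x]\<close> depends on \<open>\<pi>\<close> only through these marginals.
\<close>

lemma has_bochner_integral_pair_pmf_mult:
  fixes \<pi> :: "'a pmf" and c :: "'a \<Rightarrow> real" and g :: "'b \<Rightarrow> real"
  assumes "prob_space \<Gamma>" and g: "integrable \<Gamma> g" and c: "\<And>\<sigma>. \<bar>c \<sigma>\<bar> \<le> B"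
  shows "has_bochner_integral (measure_pmf \<pi> \<Otimes>\<^sub>M \<Gamma>) (\<lambda>(\<sigma>, v). c \<sigma> * g v)
           (measure_pmf.expectation \<pi> c * integral\<^sup>L \<Gamma> g)"
proof -
  interpret pair_prob_space "measure_pmf \<pi>" \<Gamma>
    using assms(1) by (simp add: pair_prob_space_def pair_sigma_finite_def prob_space_imp_sigma_finite
      prob_space_measure_pmf)
  have [measurable]: "g \<in> borel_measurable \<Gamma>" "c \<in> borel_measurable (measure_pmf \<pi>)"
    using g by auto
  have meas: "(\<lambda>(\<sigma>, v). c \<sigma> * g v) \<in> borel_measurable (measure_pmf \<pi> \<Otimes>\<^sub>M \<Gamma>)"
    by measurable
  have "integrable (measure_pmf \<pi>) (\<lambda>\<sigma>. \<bar>c \<sigma>\<bar> * K)" for K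
    by (rule measure_pmf.integrable_const_bound[where B = "B * \<bar>K\<bar>"])
      (auto simp: abs_mult intro!: mult_right_mono c)
  with meas have int: "integrable (measure_pmf \<pi> \<Otimes>\<^sub>M \<Gamma>) (\<lambda>(\<sigma>, v). c \<sigma> * g v)"
    using g by (intro Fubini_integrable) (auto simp: abs_mult)
  moreover have "integral\<^sup>L (measure_pmf \<pi> \<Otimes>\<^sub>M \<Gamma>) (\<lambda>(\<sigma>, v). c \<sigma> * g v)
      = measure_pmf.expectation \<pi> c * integral\<^sup>L \<Gamma> g"
    using integral_fst'[OF int] by simp
  ultimately show ?thesis
    by (simp add: has_bochner_integral_iff)
qed

lemma card_Top:
  fixes v :: "'x::finite \<Rightarrow> real"
  assumes "inj v" and "k \<le> CARD('x)"
  shows "card {x. Top k x v} = k"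
proof -
  define r where "r x = card {x'. v x' > v x}" for x
  have r_less: "r y < r x" if "v x < v y" for x y
    unfolding r_def by (rule psubset_card_mono) (use that in auto)
  have "inj r"
  proof (rule injI, rule ccontr)
    fix x y assume "r x = r y" "x \<noteq> y"
    then have "v x \<noteq> v y"
      using \<open>inj v\<close> by (auto dest: injD)
    then show False
      using r_less[of x y] r_less[of y x] \<open>r x = r y\<close> by linarith
  qed
  have "r x < CARD('x)" for x
    unfolding r_def by (rule psubset_card_mono) auto
  then have "range r \<subseteq> {..<CARD('x)}"
    by auto
  with \<open>inj r\<close> have "range r = {..<CARD('x)}"
    by (intro card_subset_eq) (auto simp: card_image)
  then have "card (r -` {..<k}) = card {..<k}"
    using \<open>inj r\<close> assms(2) by (intro card_vimage_inj) auto
  then show ?thesis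
    by (simp add: Top_def r_def vimage_def)
qed

lemma pred_Top [measurable]:
  "Measurable.pred (PiM (UNIV :: 'x::finite set) (\<lambda>_. borel)) (Top k x)"
proof -
  have "Top k x = (\<lambda>v::'x \<Rightarrow> real. (\<Sum>x'\<in>UNIV. indicator {y. v x < v y} x') < real k)"
    by (simp add: fun_eq_iff Top_def indicator_def sum.If_cases)
  then show ?thesis
    by (simp only:) measurable
qed

lemma sets_Top:
  assumes "sets \<Gamma> = sets (PiM (UNIV :: 'x::finite set) (\<lambda>_. borel))"
  shows "{v \<in> space \<Gamma>. Top k x v} \<in> sets \<Gamma>"
proof -
  have "Measurable.pred \<Gamma> (Top k x)"
    by (subst measurable_cong_sets[OF assms refl]) (rule pred_Top)
  then show ?thesis
    by (simp add: pred_def)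
qed

lemma sum_prob_Top:
  fixes \<Gamma> :: "('x::finite \<Rightarrow> real) measure"
  assumes \<Gamma>: "merit_distribution \<Gamma>" and k: "k \<le> CARD('x)"
  shows "(\<Sum>x\<in>UNIV. measure \<Gamma> {v \<in> space \<Gamma>. Top k x v}) = real k"
proof -
  interpret prob_space \<Gamma>
    using \<Gamma> by (simp add: merit_distribution_def)
  define E where "E x = {v \<in> space \<Gamma>. Top k x v}" for x
  have E [measurable]: "E x \<in> sets \<Gamma>" for x
    using \<Gamma> unfolding E_def merit_distribution_def by (blast intro: sets_Top)
  have "(\<Sum>x\<in>UNIV. measure \<Gamma> (E x)) = (\<Sum>x\<in>UNIV. \<integral>v. indicator (E x) v \<partial>\<Gamma>)"
    using sets.sets_into_space[OF E] by (simp add: Int_absorb2)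
  also have "\<dots> = (\<integral>v. (\<Sum>x\<in>UNIV. indicator (E x) v) \<partial>\<Gamma>)"
    by (rule Bochner_Integration.integral_sum[symmetric])
      (auto intro!: integrable_real_indicator E simp: less_top[symmetric])
  also have "\<dots> = (\<integral>v. real k \<partial>\<Gamma>)"
  proof (rule integral_cong_AE)
    have "AE v in \<Gamma>. inj v"
      using \<Gamma> by (simp add: merit_distribution_def)
    then show "AE v in \<Gamma>. (\<Sum>x\<in>UNIV. indicator (E x) v) = real k"
      using AE_space
    proof eventually_elim
      case (elim v)
      then have "(\<Sum>x\<in>UNIV. indicator (E x) v) = real (card {x. Top k x v})"
        by (simp add: E_def indicator_def sum.If_cases)
      then show ?case
        using card_Top[OF elim(1) k] by simp
    qed
  qed simp_all
  finally show ?thesis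
    by (simp add: E_def prob_space)
qed

lemma sum_marg_eq_1: "(\<Sum>x\<in>(UNIV :: 'x::finite set). marg \<pi> x k) = 1"
proof -
  have "marg \<pi> x k = pmf (map_pmf (\<lambda>\<sigma>. \<sigma> k) \<pi>) x" for x
    by (simp add: marg_def pmf_map vimage_def)
  then show ?thesis
    by (simp add: sum_pmf_eq_1)
qed

lemma fair_cumulative_marg_eq_prob_Top:
  fixes \<Gamma> :: "('x::finite \<Rightarrow> real) measure"
  assumes \<Gamma>: "merit_distribution \<Gamma>" and fair: "rho_fair 1 \<Gamma> \<pi>" and k: "k \<in> {1..CARD('x)}"
  shows "(\<Sum>k'=1..k. marg \<pi> x k') = measure \<Gamma> {v \<in> space \<Gamma>. Top k x v}"
proof -
  define C where "C y = (\<Sum>k'=1..k. marg \<pi> y k')" for y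
  define p where "p y = measure \<Gamma> {v \<in> space \<Gamma>. Top k y v}" for y
  have "sum C UNIV = (\<Sum>k'=1..k. \<Sum>y\<in>UNIV. marg \<pi> y k')"
    unfolding C_def by (rule sum.swap)
  also have "\<dots> = real k"
    by (simp add: sum_marg_eq_1)
  also have "\<dots> = sum p UNIV"
    unfolding p_def using sum_prob_Top[OF \<Gamma>] k by simp
  finally have "p x = C x"
    using fair k by (intro sum_mono_inv[of p UNIV C x]) (auto simp: rho_fair_def C_def p_def)
  then show ?thesis
    by (simp add: C_def p_def)
qed

lemma fair_marg_eq:
  fixes \<Gamma> :: "('x::finite \<Rightarrow> real) measure"
  assumes \<Gamma>: "merit_distribution \<Gamma>" and "rho_fair 1 \<Gamma> \<pi>1" and "rho_fair 1 \<Gamma> \<pi>2"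
    and k: "k \<in> {1..CARD('x)}"
  shows "marg \<pi>1 x k = marg \<pi>2 x k"
proof -
  have cumulative: "(\<Sum>k'=1..j. marg \<pi>1 x k') = (\<Sum>k'=1..j. marg \<pi>2 x k')" if "j \<le> CARD('x)" for j
    using that fair_cumulative_marg_eq_prob_Top[OF \<Gamma> assms(2), of j x]
      fair_cumulative_marg_eq_prob_Top[OF \<Gamma> assms(3), of j x]
    by (cases "j = 0") auto
  obtain j where j: "k = Suc j"
    using k by (cases k) auto
  show ?thesis
    using cumulative[of j] cumulative[of k] k unfolding j by simp
qed

lemma exp_util_eq_sum_marg:
  fixes \<Gamma> :: "('x::finite \<Rightarrow> real) measure"
  assumes "prob_space \<Gamma>" and int: "\<And>x. integrable \<Gamma> (\<lambda>v. v x)"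
  shows "exp_util w \<pi> \<Gamma> = (\<Sum>k=1..CARD('x). \<Sum>x\<in>UNIV. w k * marg \<pi> x k * integral\<^sup>L \<Gamma> (\<lambda>v. v x))"
proof -
  define c where "c k x = (\<lambda>\<sigma>. w k * indicator {\<sigma>::nat \<Rightarrow> 'x. \<sigma> k = x} \<sigma>)" for k x
  have util: "util w \<sigma> v = (\<Sum>k=1..CARD('x). \<Sum>x\<in>UNIV. c k x \<sigma> * v x)" for \<sigma> v
  proof -
    have "v (\<sigma> k) = (\<Sum>x\<in>UNIV. indicator {\<sigma>::nat \<Rightarrow> 'x. \<sigma> k = x} \<sigma> * v x)" for k
      by (simp add: indicator_def)
    then show ?thesis
      unfolding util_def c_def mult.assoc sum_distrib_left[symmetric] by simp
  qed
  have "measure_pmf.expectation \<pi> (c k x) = w k * marg \<pi> x k" for k x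
    by (simp add: c_def marg_def)
  moreover have "has_bochner_integral (measure_pmf \<pi> \<Otimes>\<^sub>M \<Gamma>) (\<lambda>(\<sigma>, v). c k x \<sigma> * v x)
      (measure_pmf.expectation \<pi> (c k x) * integral\<^sup>L \<Gamma> (\<lambda>v. v x))" for k x
    by (rule has_bochner_integral_pair_pmf_mult[OF assms(1) int, where B = "\<bar>w k\<bar>"])
      (simp add: c_def indicator_def)
  ultimately have "has_bochner_integral (measure_pmf \<pi> \<Otimes>\<^sub>M \<Gamma>) (\<lambda>(\<sigma>, v). util w \<sigma> v)
      (\<Sum>k=1..CARD('x). \<Sum>x\<in>UNIV. w k * marg \<pi> x k * integral\<^sup>L \<Gamma> (\<lambda>v. v x))"
    unfolding util case_prod_beta by (intro has_bochner_integral_sum) simp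
  then show ?thesis
    unfolding exp_util_def by (rule has_bochner_integral_integral_eq)
qed

theorem lemma2:
  fixes \<Gamma> :: "('x::finite \<Rightarrow> real) measure"
    and w :: "nat \<Rightarrow> real"
    and \<pi>1 \<pi>2 :: "(nat \<Rightarrow> 'x) pmf"
  assumes "merit_distribution \<Gamma>"
    and "\<And>x. integrable \<Gamma> (\<lambda>v. v x)"
    and "\<And>i j. 1 \<le> i \<Longrightarrow> i \<le> j \<Longrightarrow> j \<le> CARD('x) \<Longrightarrow> w j \<le> w i"
    and "ranking_distribution \<pi>1" and "rho_fair 1 \<Gamma> \<pi>1"
    and "ranking_distribution \<pi>2" and "rho_fair 1 \<Gamma> \<pi>2"
  shows "exp_util w \<pi>1 \<Gamma> = exp_util w \<pi>2 \<Gamma>"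
proof -
  have "prob_space \<Gamma>"
    using assms(1) by (simp add: merit_distribution_def)
  then show ?thesis
    using fair_marg_eq[OF assms(1,5,7)]
    by (simp add: exp_util_eq_sum_marg[OF _ assms(2)])
qed

end
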